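(* Let $(s_i)_{i\in\mathbb{Z}}$ be a strictly increasing bi-infinite real sequence, unbounded above and below, and let $F:\mathbb{R}^2\to\mathbb{R}^d$ satisfy $$F(s,t)=\frac{s-s_i}{s_{i+1}-s_i}F(s_{i+1},t)+\frac{s_{i+1}-s}{s_{i+1}-s_i}F(s_i,t),\qquad s\in[s_i,s_{i+1}],\ t\in\mathbb{R},\ i\in\mathbb{Z}.$$ Suppose $\|[\sigma_1,\sigma_2;\tau_1,\tau_2]F\|_\infty\le L$ whenever $\sigma_1\ne\sigma_2$ both lie in $[s_i,s_{i+1}]$ for some $i\in\mathbb{Z}$ and $\tau_1\ne\tau_2$ are arbitrary reals. Then $F$ has the BMSDD property with constant $L$ in $\mathbb{R}^2$.
   Context: For $\sigma_1\ne\sigma_2$, $\tau_1\ne\tau_2$, $[\sigma_1,\sigma_2;\tau_1,\tau_2]F=\frac{F(\sigma_1,\tau_1)+F(\sigma_2,\tau_2)-F(\sigma_2,\tau_1)-F(\sigma_1,\tau_2)}{(\sigma_1-\sigma_2)(\tau_1-\tau_2)}$. $F$ has the BMSDD property with constant $L$ in $\mathbb{R}^2$ if $\|[\sigma_1,\sigma_2;\tau_1,\tau_2]F\|_\infty\le L$ for all reals $\sigma_1\ne\sigma_2$, $\tau_1\ne\tau_2$. *)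

theory Defs
  imports "HOL-Analysis.Analysis"
begin

definition mixed_dd :: "(real \<Rightarrow> real \<Rightarrow> real^'d) \<Rightarrow> real \<Rightarrow> real \<Rightarrow> real \<Rightarrow> real \<Rightarrow> real^'d" where
  "mixed_dd F \<sigma>1 \<sigma>2 \<tau>1 \<tau>2 =
     (1 / ((\<sigma>1 - \<sigma>2) * (\<tau>1 - \<tau>2))) *\<^sub>R (F \<sigma>1 \<tau>1 + F \<sigma>2 \<tau>2 - F \<sigma>2 \<tau>1 - F \<sigma>1 \<tau>2)"

definition sup_norm :: "real^'d \<Rightarrow> real" where
  "sup_norm x = Max (range (\<lambda>k. \<bar>x $ k\<bar>))"

definition BMSDD :: "(real \<Rightarrow> real \<Rightarrow> real^'d) \<Rightarrow> real \<Rightarrow> bool" where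
  "BMSDD F L \<longleftrightarrow> (\<forall>\<sigma>1 \<sigma>2 \<tau>1 \<tau>2. \<sigma>1 \<noteq> \<sigma>2 \<longrightarrow> \<tau>1 \<noteq> \<tau>2 \<longrightarrow>
      sup_norm (mixed_dd F \<sigma>1 \<sigma>2 \<tau>1 \<tau>2) \<le> L)"

end

theory Submission
  imports Defs
begin

text \<open>For fixed \<open>\<tau>1 \<noteq> \<tau>2\<close> and a coordinate \<open>k\<close>, a bound \<open>L\<close> on the mixed divided differences
  with \<open>\<sigma>1, \<sigma>2\<close> in a set \<open>U\<close> says exactly that \<open>\<sigma> \<mapsto> (F \<sigma> \<tau>1 - F \<sigma> \<tau>2) $ k\<close> is
  \<open>L \<bar>\<tau>1 - \<tau>2\<bar>\<close>-Lipschitz on \<open>U\<close>. Lipschitz bounds on the consecutive cells \<open>[s i, s (i+1)]\<close>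
  of a grid exhausting the real line glue to a Lipschitz bound on all of \<open>\<real>\<close>, by the
  triangle inequality through the grid points.\<close>

lemma lipschitz_on_grid_cells_chain:
  fixes s :: "int \<Rightarrow> real" and h :: "real \<Rightarrow> 'a::metric_space"
  assumes cells: "\<And>i. C-lipschitz_on {s i .. s (i + 1)} h"
  shows "C-lipschitz_on {s i .. s (i + int n)} h"
proof (induction n)
  case 0
  show ?case
    using lipschitz_on_nonneg[OF cells] by (simp add: lipschitz_on_singleton)
next
  case (Suc n)
  have "C-lipschitz_on {s i .. s (i + int n + 1)} (\<lambda>x. if x \<le> s (i + int n) then h x else h x)"
    by (rule lipschitz_on_concat[OF Suc.IH cells refl])
  then show ?case
    by (simp add: ac_simps)
qed

lemma lipschitz_on_UNIV_if_grid_cells: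
  fixes s :: "int \<Rightarrow> real" and h :: "real \<Rightarrow> 'a::metric_space"
  assumes mono: "strict_mono s"
    and above: "\<forall>M. \<exists>i. s i > M"
    and below: "\<forall>M. \<exists>i. s i < M"
    and cells: "\<And>i. C-lipschitz_on {s i .. s (i + 1)} h"
  shows "C-lipschitz_on UNIV h"
proof (rule lipschitz_onI)
  fix x y :: real
  obtain i where i: "s i < min x y" using below by blast
  obtain j where j: "s j > max x y" using above by blast
  have "s i < s j" using i j by linarith
  then have "i < j" using mono by (simp add: strict_mono_less)
  then have "j = i + int (nat (j - i))" by simp
  then have "{x, y} \<subseteq> {s i .. s (i + int (nat (j - i)))}"
    using i j by auto
  then show "dist (h x) (h y) \<le> C * dist x y"
    using lipschitz_on_grid_cells_chain[where s=s and h=h, OF cells] by (meson insert_subset lipschitz_onD)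
next
  show "0 \<le> C" using lipschitz_on_nonneg[OF cells] .
qed

lemma sup_norm_le_iff: "sup_norm x \<le> L \<longleftrightarrow> (\<forall>k. \<bar>x $ k\<bar> \<le> L)"
  unfolding sup_norm_def by (subst Max_le_iff) auto

lemma mixed_dd_component:
  "mixed_dd F \<sigma>1 \<sigma>2 \<tau>1 \<tau>2 $ k =
     ((F \<sigma>1 \<tau>1 - F \<sigma>1 \<tau>2) $ k - (F \<sigma>2 \<tau>1 - F \<sigma>2 \<tau>2) $ k) / ((\<sigma>1 - \<sigma>2) * (\<tau>1 - \<tau>2))"
proof -
  have "F \<sigma>1 \<tau>1 + F \<sigma>2 \<tau>2 - F \<sigma>2 \<tau>1 - F \<sigma>1 \<tau>2 = (F \<sigma>1 \<tau>1 - F \<sigma>1 \<tau>2) - (F \<sigma>2 \<tau>1 - F \<sigma>2 \<tau>2)"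
    by (simp add: algebra_simps)
  then show ?thesis
    unfolding mixed_dd_def by simp
qed

lemma lipschitz_on_difference_iff_mixed_dd_le:
  fixes F :: "real \<Rightarrow> real \<Rightarrow> real^'d"
  assumes "\<tau>1 \<noteq> \<tau>2" and "0 \<le> L"
  shows "(L * \<bar>\<tau>1 - \<tau>2\<bar>)-lipschitz_on U (\<lambda>\<sigma>. (F \<sigma> \<tau>1 - F \<sigma> \<tau>2) $ k) \<longleftrightarrow>
    (\<forall>\<sigma>1\<in>U. \<forall>\<sigma>2\<in>U. \<sigma>1 \<noteq> \<sigma>2 \<longrightarrow> \<bar>mixed_dd F \<sigma>1 \<sigma>2 \<tau>1 \<tau>2 $ k\<bar> \<le> L)"
proof -
  have "dist ((F \<sigma>1 \<tau>1 - F \<sigma>1 \<tau>2) $ k) ((F \<sigma>2 \<tau>1 - F \<sigma>2 \<tau>2) $ k)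
          \<le> L * \<bar>\<tau>1 - \<tau>2\<bar> * dist \<sigma>1 \<sigma>2 \<longleftrightarrow> \<bar>mixed_dd F \<sigma>1 \<sigma>2 \<tau>1 \<tau>2 $ k\<bar> \<le> L"
    if "\<sigma>1 \<noteq> \<sigma>2" for \<sigma>1 \<sigma>2
    using that assms(1)
    by (simp add: mixed_dd_component dist_real_def abs_divide abs_mult divide_le_eq ac_simps)
  then show ?thesis
    using assms unfolding lipschitz_on_def by (metis dist_self mult_nonneg_nonneg abs_ge_zero zero_le_dist)
qed

theorem lemma6:
  fixes s :: "int \<Rightarrow> real" and F :: "real \<Rightarrow> real \<Rightarrow> real^'d" and L :: real
  assumes mono: "strict_mono s"
    and above: "\<forall>M. \<exists>i. s i > M"
    and below: "\<forall>M. \<exists>i. s i < M"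
    and interp: "\<And>i s' t. s i \<le> s' \<Longrightarrow> s' \<le> s (i + 1) \<Longrightarrow>
        F s' t = ((s' - s i) / (s (i + 1) - s i)) *\<^sub>R F (s (i + 1)) t
               + ((s (i + 1) - s') / (s (i + 1) - s i)) *\<^sub>R F (s i) t"
    and local_bound: "\<And>i \<sigma>1 \<sigma>2 \<tau>1 \<tau>2.
        \<sigma>1 \<in> {s i .. s (i + 1)} \<Longrightarrow> \<sigma>2 \<in> {s i .. s (i + 1)} \<Longrightarrow> \<sigma>1 \<noteq> \<sigma>2 \<Longrightarrow> \<tau>1 \<noteq> \<tau>2 \<Longrightarrow>
        sup_norm (mixed_dd F \<sigma>1 \<sigma>2 \<tau>1 \<tau>2) \<le> L"
  shows "BMSDD F L"
  unfolding BMSDD_def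
proof (intro allI impI)
  fix \<sigma>1 \<sigma>2 \<tau>1 \<tau>2 :: real
  assume "\<sigma>1 \<noteq> \<sigma>2" and "\<tau>1 \<noteq> \<tau>2"
  have "s 0 \<noteq> s (0 + 1)"
    using mono by (simp add: strict_mono_eq)
  then have "0 \<le> L"
    using local_bound[of "s 0" 0 "s (0 + 1)" 0 1] mono
    by (simp add: sup_norm_le_iff strict_mono_less_eq) (meson abs_ge_zero order_trans)
  have "(L * \<bar>\<tau>1 - \<tau>2\<bar>)-lipschitz_on UNIV (\<lambda>\<sigma>. (F \<sigma> \<tau>1 - F \<sigma> \<tau>2) $ k)" for k
  proof (rule lipschitz_on_UNIV_if_grid_cells[OF mono above below])
    fix i
    show "(L * \<bar>\<tau>1 - \<tau>2\<bar>)-lipschitz_on {s i .. s (i + 1)} (\<lambda>\<sigma>. (F \<sigma> \<tau>1 - F \<sigma> \<tau>2) $ k)"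
      unfolding lipschitz_on_difference_iff_mixed_dd_le[OF \<open>\<tau>1 \<noteq> \<tau>2\<close> \<open>0 \<le> L\<close>]
      using local_bound \<open>\<tau>1 \<noteq> \<tau>2\<close> by (simp add: sup_norm_le_iff)
  qed
  then have "\<bar>mixed_dd F \<sigma>1 \<sigma>2 \<tau>1 \<tau>2 $ k\<bar> \<le> L" for k
    unfolding lipschitz_on_difference_iff_mixed_dd_le[OF \<open>\<tau>1 \<noteq> \<tau>2\<close> \<open>0 \<le> L\<close>]
    using \<open>\<sigma>1 \<noteq> \<sigma>2\<close> by blast
  then show "sup_norm (mixed_dd F \<sigma>1 \<sigma>2 \<tau>1 \<tau>2) \<le> L"
    by (simp add: sup_norm_le_iff)
qed

end
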